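(* For every integer $n\ge 4$, $\mathrm{wdim}_3(K_n\times K_n)=2n$.
   Context: $K_n\times K_n$ is the direct product of two complete graphs on $n$ vertices: vertex set $[n]\times[n]$ with $[n]=\{1,\dots,n\}$, and $(i,j)$ adjacent to $(i',j')$ iff $i\ne i'$ and $j\ne j'$. For a connected graph $G$ with distance $d_G$, vertices $x,y,z$ and $S\subseteq V(G)$, let $\Delta_z(x,y)=|d_G(x,z)-d_G(y,z)|$ and $\Delta_S(x,y)=\sum_{z\in S}\Delta_z(x,y)$. A set $S$ is a weak $k$-resolving set if $\Delta_S(x,y)\ge k$ for all distinct $x,y\in V(G)$, and $\mathrm{wdim}_k(G)$ is the minimum cardinality of a weak $k$-resolving set of $G$. *)

theory Defs
  imports Main
begin

definition is_walk :: "'a set \<Rightarrow> ('a \<Rightarrow> 'a \<Rightarrow> bool) \<Rightarrow> 'a list \<Rightarrow> bool" where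
  "is_walk V E p \<longleftrightarrow> p \<noteq> [] \<and> set p \<subseteq> V \<and> (\<forall>i < length p - 1. E (p ! i) (p ! Suc i))"

definition gdist :: "'a set \<Rightarrow> ('a \<Rightarrow> 'a \<Rightarrow> bool) \<Rightarrow> 'a \<Rightarrow> 'a \<Rightarrow> nat" where
  "gdist V E x y = (LEAST k. \<exists>p. is_walk V E p \<and> hd p = x \<and> last p = y \<and> length p = Suc k)"

definition delta_vertex :: "'a set \<Rightarrow> ('a \<Rightarrow> 'a \<Rightarrow> bool) \<Rightarrow> 'a \<Rightarrow> 'a \<Rightarrow> 'a \<Rightarrow> nat" where
  "delta_vertex V E z x y = nat \<bar>int (gdist V E x z) - int (gdist V E y z)\<bar>"

definition delta_set :: "'a set \<Rightarrow> ('a \<Rightarrow> 'a \<Rightarrow> bool) \<Rightarrow> 'a set \<Rightarrow> 'a \<Rightarrow> 'a \<Rightarrow> nat" where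
  "delta_set V E S x y = (\<Sum>z\<in>S. delta_vertex V E z x y)"

definition weak_k_resolving :: "'a set \<Rightarrow> ('a \<Rightarrow> 'a \<Rightarrow> bool) \<Rightarrow> nat \<Rightarrow> 'a set \<Rightarrow> bool" where
  "weak_k_resolving V E k S \<longleftrightarrow> S \<subseteq> V \<and>
     (\<forall>x\<in>V. \<forall>y\<in>V. x \<noteq> y \<longrightarrow> delta_set V E S x y \<ge> k)"

definition wdim :: "'a set \<Rightarrow> ('a \<Rightarrow> 'a \<Rightarrow> bool) \<Rightarrow> nat \<Rightarrow> nat" where
  "wdim V E k = (LEAST m. \<exists>S. weak_k_resolving V E k S \<and> card S = m)"

definition KxK_V :: "nat \<Rightarrow> (nat \<times> nat) set" where
  "KxK_V n = {1..n} \<times> {1..n}"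

definition KxK_E :: "(nat \<times> nat) \<Rightarrow> (nat \<times> nat) \<Rightarrow> bool" where
  "KxK_E u v \<longleftrightarrow> fst u \<noteq> fst v \<and> snd u \<noteq> snd v"

end

theory Submission
  imports Defs
begin

(* For n >= 3 two distinct vertices of K_n x K_n are at distance 1 if they differ in both
   coordinates and at distance 2 otherwise. Hence for two vertices in a common row, Delta_S
   counts the elements of S in their two columns, plus one for each of the two vertices lying
   in S; symmetrically for a common column; and for two vertices in general position it is the
   number of elements of S in their two rows and two columns, minus a correction that depends
   on which corners of the rectangle they span lie in S.

   If S is weak 3-resolving, any two columns together contain at least 3 elements of S, so
   |S| < 2n forces one column with a single element of S and all others with exactly two;
   likewise for rows. The single elements of the light row and the light column then yield a
   rectangle with two opposite corners in S whose two rows and two columns hold at most 6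
   elements of S, so its other two corners are resolved by at most 2.
   Conversely, the two cyclic diagonals {(a,a), (a,a+1 mod n)} meet every row and column twice
   and contain no rectangle, which makes them a weak 3-resolving set of size 2n. *)

definition KxK_dist :: "nat \<times> nat \<Rightarrow> nat \<times> nat \<Rightarrow> nat" where
  "KxK_dist x y = (if x = y then 0 else if KxK_E x y then 1 else 2)"

lemma exists_avoiding_two:
  assumes "3 \<le> n"
  shows "\<exists>c\<in>{1..n}. c \<noteq> u \<and> c \<noteq> (v::nat)"
proof -
  have "\<exists>c\<in>{1,2,3}. c \<noteq> u \<and> c \<noteq> v" by auto
  then show ?thesis using assms by auto
qed

lemma KxK_common_neighbour:
  assumes "3 \<le> n" and "x \<in> KxK_V n" and "y \<in> KxK_V n"
  obtains w where "w \<in> KxK_V n" "KxK_E x w" "KxK_E w y"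
proof -
  obtain c where "c \<in> {1..n}" "c \<noteq> fst x" "c \<noteq> fst y"
    using exists_avoiding_two[OF assms(1)] by blast
  moreover obtain d where "d \<in> {1..n}" "d \<noteq> snd x" "d \<noteq> snd y"
    using exists_avoiding_two[OF assms(1)] by blast
  ultimately show thesis
    by (intro that[of "(c, d)"]) (auto simp: KxK_V_def KxK_E_def)
qed

lemma gdist_KxK:
  assumes n: "3 \<le> n" and x: "x \<in> KxK_V n" and y: "y \<in> KxK_V n"
  shows "gdist (KxK_V n) KxK_E x y = KxK_dist x y"
  unfolding gdist_def
proof (rule Least_equality)
  show "\<exists>p. is_walk (KxK_V n) KxK_E p \<and> hd p = x \<and> last p = y \<and> length p = Suc (KxK_dist x y)"
  proof (cases "x = y \<or> KxK_E x y")
    case True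
    then show ?thesis using x y
      by (intro exI[of _ "if x = y then [x] else [x, y]"]) (auto simp: is_walk_def KxK_dist_def)
  next
    case False
    obtain w where "w \<in> KxK_V n" "KxK_E x w" "KxK_E w y"
      using KxK_common_neighbour[OF n x y] .
    with False x y show ?thesis
      by (intro exI[of _ "[x, w, y]"]) (auto simp: is_walk_def KxK_dist_def less_Suc_eq)
  qed
next
  fix k assume "\<exists>p. is_walk (KxK_V n) KxK_E p \<and> hd p = x \<and> last p = y \<and> length p = Suc k"
  then obtain p where p: "is_walk (KxK_V n) KxK_E p" "hd p = x" "last p = y" "length p = Suc k"
    by blast
  consider "k = 0" | "k = 1" | "2 \<le> k" by linarith
  then show "KxK_dist x y \<le> k"
  proof cases
    case 1
    then obtain u where "p = [u]" using p(4) by (auto simp: length_Suc_conv)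
    then show ?thesis using p by (simp add: KxK_dist_def)
  next
    case 2
    then obtain u v where "p = [u, v]" using p(4) by (auto simp: length_Suc_conv)
    then show ?thesis using p 2 by (auto simp: KxK_dist_def is_walk_def)
  qed (simp add: KxK_dist_def)
qed

lemma delta_vertex_KxK:
  assumes "3 \<le> n" and "x \<in> KxK_V n" "y \<in> KxK_V n" "z \<in> KxK_V n"
  shows "delta_vertex (KxK_V n) KxK_E z x y = nat \<bar>int (KxK_dist x z) - int (KxK_dist y z)\<bar>"
  using assms by (simp add: delta_vertex_def gdist_KxK)

definition row_count :: "(nat \<times> nat) set \<Rightarrow> nat \<Rightarrow> nat" where
  "row_count S a = card {z\<in>S. fst z = a}"

definition col_count :: "(nat \<times> nat) set \<Rightarrow> nat \<Rightarrow> nat" where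
  "col_count S b = card {z\<in>S. snd z = b}"

lemma finite_KxK_V [simp]: "finite (KxK_V n)"
  by (simp add: KxK_V_def)

lemma sum_of_bool_fst_eq: "finite S \<Longrightarrow> (\<Sum>z\<in>S. of_bool (fst z = a)) = row_count S a"
  by (simp add: row_count_def Collect_conj_eq Int_commute)

lemma sum_of_bool_snd_eq: "finite S \<Longrightarrow> (\<Sum>z\<in>S. of_bool (snd z = b)) = col_count S b"
  by (simp add: col_count_def Collect_conj_eq Int_commute)

lemma sum_of_bool_eq_point: "finite S \<Longrightarrow> (\<Sum>z\<in>S. of_bool (z = x) :: nat) = of_bool (x \<in> S)"
  by (simp add: of_bool_def sum.delta')

lemma delta_set_same_row:
  assumes n: "3 \<le> n" and S: "S \<subseteq> KxK_V n"
    and x: "(a, b) \<in> KxK_V n" and y: "(a, b') \<in> KxK_V n" and "b \<noteq> b'"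
  shows "delta_set (KxK_V n) KxK_E S (a, b) (a, b')
    = col_count S b + col_count S b' + of_bool ((a, b) \<in> S) + of_bool ((a, b') \<in> S)"
proof -
  have "delta_set (KxK_V n) KxK_E S (a, b) (a, b') = (\<Sum>z\<in>S.
      of_bool (snd z = b) + of_bool (snd z = b') + of_bool (z = (a, b)) + of_bool (z = (a, b')))"
    unfolding delta_set_def
  proof (rule sum.cong[OF refl])
    fix z assume "z \<in> S"
    with S have "z \<in> KxK_V n" by blast
    with \<open>b \<noteq> b'\<close> show "delta_vertex (KxK_V n) KxK_E z (a, b) (a, b') = of_bool (snd z = b)
        + of_bool (snd z = b') + of_bool (z = (a, b)) + of_bool (z = (a, b'))"
      by (cases z) (auto simp: delta_vertex_KxK[OF n x y] KxK_dist_def KxK_E_def)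
  qed
  also have "\<dots> = col_count S b + col_count S b' + of_bool ((a, b) \<in> S) + of_bool ((a, b') \<in> S)"
    using finite_subset[OF S finite_KxK_V]
    by (simp add: sum.distrib sum_of_bool_snd_eq sum_of_bool_eq_point del: sum_of_bool_eq)
  finally show ?thesis .
qed

(* The correction terms are moved to the left-hand side to avoid truncated subtraction. *)
lemma delta_set_diagonal:
  assumes n: "3 \<le> n" and S: "S \<subseteq> KxK_V n"
    and x: "(a, b) \<in> KxK_V n" and y: "(a', b') \<in> KxK_V n" and "a \<noteq> a'" "b \<noteq> b'"
  shows "delta_set (KxK_V n) KxK_E S (a, b) (a', b')
      + of_bool ((a, b) \<in> S) + of_bool ((a', b') \<in> S) + 2 * of_bool ((a, b') \<in> S) + 2 * of_bool ((a', b) \<in> S)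
    = row_count S a + row_count S a' + col_count S b + col_count S b'"
proof -
  have "(\<Sum>z\<in>S. delta_vertex (KxK_V n) KxK_E z (a, b) (a', b')
      + of_bool (z = (a, b)) + of_bool (z = (a', b')) + 2 * of_bool (z = (a, b')) + 2 * of_bool (z = (a', b)))
    = (\<Sum>z\<in>S. of_bool (fst z = a) + of_bool (fst z = a') + of_bool (snd z = b) + of_bool (snd z = b'))"
  proof (rule sum.cong[OF refl])
    fix z assume "z \<in> S"
    with S have "z \<in> KxK_V n" by blast
    with \<open>a \<noteq> a'\<close> \<open>b \<noteq> b'\<close> show "delta_vertex (KxK_V n) KxK_E z (a, b) (a', b')
        + of_bool (z = (a, b)) + of_bool (z = (a', b')) + 2 * of_bool (z = (a, b')) + 2 * of_bool (z = (a', b))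
      = of_bool (fst z = a) + of_bool (fst z = a') + of_bool (snd z = b) + of_bool (snd z = b')"
      by (cases z) (auto simp: delta_vertex_KxK[OF n x y] KxK_dist_def KxK_E_def)
  qed
  then show ?thesis
    using finite_subset[OF S finite_KxK_V]
    by (simp add: delta_set_def sum.distrib sum_of_bool_fst_eq sum_of_bool_snd_eq sum_of_bool_eq_point
        flip: sum_distrib_left del: sum_of_bool_eq)
qed

lemma delta_set_swap:
  assumes n: "3 \<le> n" and S: "S \<subseteq> KxK_V n" and x: "x \<in> KxK_V n" and y: "y \<in> KxK_V n"
  shows "delta_set (KxK_V n) KxK_E (prod.swap ` S) (prod.swap x) (prod.swap y)
    = delta_set (KxK_V n) KxK_E S x y"
proof -
  have swap_V: "prod.swap z \<in> KxK_V n \<longleftrightarrow> z \<in> KxK_V n" for z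
    by (cases z) (auto simp: KxK_V_def)
  have swap_dist: "KxK_dist (prod.swap u) (prod.swap v) = KxK_dist u v" for u v
    by (cases u; cases v) (auto simp: KxK_dist_def KxK_E_def)
  have "delta_vertex (KxK_V n) KxK_E (prod.swap z) (prod.swap x) (prod.swap y)
      = delta_vertex (KxK_V n) KxK_E z x y" if "z \<in> S" for z
  proof -
    have "z \<in> KxK_V n" using that S by blast
    then show ?thesis
      using x y by (simp add: delta_vertex_KxK[OF n] swap_V swap_dist)
  qed
  then show ?thesis
    by (simp add: delta_set_def sum.reindex)
qed

lemma swap_subset_KxK_V: "S \<subseteq> KxK_V n \<Longrightarrow> prod.swap ` S \<subseteq> KxK_V n"
  by (auto simp: KxK_V_def)

lemma col_count_swap: "col_count (prod.swap ` S) a = row_count S a"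
proof -
  have "{z \<in> prod.swap ` S. snd z = a} = prod.swap ` {z\<in>S. fst z = a}" by auto
  then show ?thesis by (simp add: col_count_def row_count_def card_image)
qed

lemma delta_set_same_col:
  assumes n: "3 \<le> n" and S: "S \<subseteq> KxK_V n"
    and x: "(a, b) \<in> KxK_V n" and y: "(a', b) \<in> KxK_V n" and "a \<noteq> a'"
  shows "delta_set (KxK_V n) KxK_E S (a, b) (a', b)
    = row_count S a + row_count S a' + of_bool ((a, b) \<in> S) + of_bool ((a', b) \<in> S)"
proof -
  have x': "(b, a) \<in> KxK_V n" and y': "(b, a') \<in> KxK_V n"
    using x y by (auto simp: KxK_V_def)
  have "delta_set (KxK_V n) KxK_E S (a, b) (a', b)
      = delta_set (KxK_V n) KxK_E (prod.swap ` S) (b, a) (b, a')"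
    using delta_set_swap[OF n swap_subset_KxK_V[OF S] x' y'] by (simp add: image_image)
  also have "\<dots> = row_count S a + row_count S a' + of_bool ((a, b) \<in> S) + of_bool ((a', b) \<in> S)"
    using delta_set_same_row[OF n swap_subset_KxK_V[OF S] x' y' \<open>a \<noteq> a'\<close>]
    by (simp add: col_count_swap)
  finally show ?thesis .
qed

lemma weak_k_resolving_swap:
  assumes n: "3 \<le> n" and S: "weak_k_resolving (KxK_V n) KxK_E k S"
  shows "weak_k_resolving (KxK_V n) KxK_E k (prod.swap ` S)"
  unfolding weak_k_resolving_def
proof (intro conjI ballI impI)
  have S_sub: "S \<subseteq> KxK_V n" using S by (simp add: weak_k_resolving_def)
  then show "prod.swap ` S \<subseteq> KxK_V n" by (rule swap_subset_KxK_V)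
  fix x y assume x: "x \<in> KxK_V n" and y: "y \<in> KxK_V n" and "x \<noteq> y"
  have "prod.swap x \<in> KxK_V n" "prod.swap y \<in> KxK_V n" "prod.swap x \<noteq> prod.swap y"
    using x y \<open>x \<noteq> y\<close> by (auto simp: KxK_V_def)
  then have "k \<le> delta_set (KxK_V n) KxK_E S (prod.swap x) (prod.swap y)"
    using S by (simp add: weak_k_resolving_def)
  then show "k \<le> delta_set (KxK_V n) KxK_E (prod.swap ` S) x y"
    using delta_set_swap[OF n S_sub \<open>prod.swap x \<in> KxK_V n\<close> \<open>prod.swap y \<in> KxK_V n\<close>] by simp
qed

lemma card_eq_sum_col_count:
  assumes "S \<subseteq> KxK_V n"
  shows "card S = (\<Sum>b\<in>{1..n}. col_count S b)"
proof -
  have "finite S" using finite_subset[OF assms finite_KxK_V] .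
  moreover have "snd ` S \<subseteq> {1..n}" using assms by (auto simp: KxK_V_def)
  ultimately have "(\<Sum>b\<in>{1..n}. \<Sum>z\<in>{z\<in>S. snd z = b}. 1) = (\<Sum>z\<in>S. 1::nat)"
    by (intro sum.group) auto
  then show ?thesis by (simp add: col_count_def)
qed

lemma one_and_twos_if_pairwise_ge_3:
  fixes c :: "'a \<Rightarrow> nat"
  assumes fin: "finite B" and card: "3 \<le> card B" and small: "(\<Sum>b\<in>B. c b) < 2 * card B"
    and pair: "\<And>b b'. b \<in> B \<Longrightarrow> b' \<in> B \<Longrightarrow> b \<noteq> b' \<Longrightarrow> 3 \<le> c b + c b'"
  shows "\<exists>b0\<in>B. c b0 = 1 \<and> (\<forall>b\<in>B - {b0}. c b = 2)"
proof -
  obtain b0 where b0: "b0 \<in> B" "c b0 \<le> 1"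
  proof (rule ccontr)
    assume "\<not> thesis"
    with that have "\<And>b. b \<in> B \<Longrightarrow> 2 \<le> c b" by force
    then have "card B * 2 \<le> (\<Sum>b\<in>B. c b)" using sum_bounded_below[of B 2 c] by simp
    with small show False by simp
  qed
  define R where "R = B - {b0}"
  have card_R: "card R = card B - 1" and fin_R: "finite R"
    using b0(1) fin by (simp_all add: R_def)
  have sum_B: "(\<Sum>b\<in>B. c b) = c b0 + (\<Sum>b\<in>R. c b)"
    using b0(1) fin by (simp add: R_def sum.remove)
  have rest: "3 - c b0 \<le> c b" if "b \<in> R" for b
    using pair[of b0 b] that b0(1) by (auto simp: R_def)
  have "c b0 \<noteq> 0"
  proof
    assume "c b0 = 0"
    then have "card R * 3 \<le> (\<Sum>b\<in>R. c b)" using rest sum_bounded_below[of R 3 c] by simp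
    with small sum_B card_R card \<open>c b0 = 0\<close> show False by simp
  qed
  with b0 have one: "c b0 = 1" by simp
  have ge2: "2 \<le> c b" if "b \<in> R" for b
    using rest[OF that] one by simp
  have "(\<Sum>b\<in>R. c b) \<le> (\<Sum>b\<in>R. 2)"
    using small sum_B one card_R card by simp
  moreover have "(\<Sum>b\<in>R. 2) \<le> (\<Sum>b\<in>R. c b)"
    using ge2 by (rule sum_mono)
  ultimately have "(\<Sum>b\<in>R. 2) = (\<Sum>b\<in>R. c b)" by (rule antisym[rotated])
  then have "\<forall>b\<in>R. 2 = c b"
    using sum_mono_inv[of "\<lambda>_. 2" R c] ge2 fin_R by blast
  with b0(1) one show ?thesis by (auto simp: R_def)
qed

lemma col_count_pair_ge_3:
  assumes n: "3 \<le> n" and S: "weak_k_resolving (KxK_V n) KxK_E 3 S"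
    and b: "b \<in> {1..n}" "b' \<in> {1..n}" "b \<noteq> b'"
  shows "3 \<le> col_count S b + col_count S b'"
proof (cases "\<exists>a\<in>{1..n}. (a, b) \<notin> S \<and> (a, b') \<notin> S")
  case True
  then obtain a where a: "a \<in> {1..n}" "(a, b) \<notin> S" "(a, b') \<notin> S" by blast
  have x: "(a, b) \<in> KxK_V n" and y: "(a, b') \<in> KxK_V n" using a b by (auto simp: KxK_V_def)
  have "3 \<le> delta_set (KxK_V n) KxK_E S (a, b) (a, b')"
    using S x y b(3) by (simp add: weak_k_resolving_def)
  with delta_set_same_row[OF n _ x y b(3)] S a show ?thesis
    by (simp add: weak_k_resolving_def)
next
  case False
  let ?C = "\<lambda>b. {z\<in>S. snd z = b}"
  have fin: "finite S" using S finite_subset[OF _ finite_KxK_V] by (auto simp: weak_k_resolving_def)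
  have "{1..n} \<subseteq> fst ` (?C b \<union> ?C b')"
    using False by (force simp: image_iff)
  then have "n \<le> card (?C b \<union> ?C b')"
    using surj_card_le[of "?C b \<union> ?C b'" "{1..n}" fst] fin by simp
  also have "\<dots> \<le> col_count S b + col_count S b'"
    unfolding col_count_def by (rule card_Un_le)
  finally show ?thesis using n by simp
qed

lemma col_counts_if_small_weak_3_resolving:
  assumes n: "3 \<le> n" and S: "weak_k_resolving (KxK_V n) KxK_E 3 S" and small: "card S < 2 * n"
  shows "\<exists>b0\<in>{1..n}. col_count S b0 = 1 \<and> (\<forall>b\<in>{1..n} - {b0}. col_count S b = 2)"
proof (rule one_and_twos_if_pairwise_ge_3)
  show "(\<Sum>b\<in>{1..n}. col_count S b) < 2 * card {1..n}"
    using small card_eq_sum_col_count[of S n] S by (simp add: weak_k_resolving_def)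
qed (use n col_count_pair_ge_3[OF n S] in auto)

lemma row_counts_if_small_weak_3_resolving:
  assumes n: "3 \<le> n" and S: "weak_k_resolving (KxK_V n) KxK_E 3 S" and small: "card S < 2 * n"
  shows "\<exists>a0\<in>{1..n}. row_count S a0 = 1 \<and> (\<forall>a\<in>{1..n} - {a0}. row_count S a = 2)"
  using col_counts_if_small_weak_3_resolving[OF n weak_k_resolving_swap[OF n S]] small
  by (simp add: card_image col_count_swap)

lemma col_count_eq_oneE:
  assumes "col_count S b = 1"
  obtains a where "{z\<in>S. snd z = b} = {(a, b)}"
proof -
  obtain z where z: "{z\<in>S. snd z = b} = {z}"
    using assms unfolding col_count_def by (rule card_1_singletonE)
  then have "z = (fst z, b)" by auto
  with z show thesis by (intro that) simp
qed

lemma row_count_eq_oneE: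
  assumes "row_count S a = 1"
  obtains b where "{z\<in>S. fst z = a} = {(a, b)}"
proof -
  obtain z where z: "{z\<in>S. fst z = a} = {z}"
    using assms unfolding row_count_def by (rule card_1_singletonE)
  then have "z = (a, snd z)" by auto
  with z show thesis by (intro that) simp
qed

lemma rectangle_count_ge_if_weak_3_resolving:
  assumes n: "3 \<le> n" and S: "weak_k_resolving (KxK_V n) KxK_E 3 S"
    and "a \<noteq> a'" "b \<noteq> b'" and corners: "(a, b') \<in> S" "(a', b) \<in> S"
  shows "7 \<le> row_count S a + row_count S a' + col_count S b + col_count S b'"
proof -
  have S_sub: "S \<subseteq> KxK_V n" using S by (simp add: weak_k_resolving_def)
  have x: "(a, b) \<in> KxK_V n" and y: "(a', b') \<in> KxK_V n"
    using corners S_sub by (auto simp: KxK_V_def)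
  have "3 \<le> delta_set (KxK_V n) KxK_E S (a, b) (a', b')"
    using S x y \<open>a \<noteq> a'\<close> by (simp add: weak_k_resolving_def)
  with delta_set_diagonal[OF n S_sub x y \<open>a \<noteq> a'\<close> \<open>b \<noteq> b'\<close>] corners show ?thesis by simp
qed

lemma card_ge_if_weak_3_resolving:
  assumes n: "3 \<le> n" and S: "weak_k_resolving (KxK_V n) KxK_E 3 S"
  shows "2 * n \<le> card S"
proof (rule ccontr)
  assume "\<not> 2 * n \<le> card S"
  then have small: "card S < 2 * n" by simp
  have S_sub: "S \<subseteq> KxK_V n" using S by (simp add: weak_k_resolving_def)
  have in_range: "a \<in> {1..n}" "b \<in> {1..n}" if "(a, b) \<in> S" for a b
    using that S_sub by (auto simp: KxK_V_def)
  obtain b0 where b0: "b0 \<in> {1..n}" "col_count S b0 = 1" "\<And>b. b \<in> {1..n} - {b0} \<Longrightarrow> col_count S b = 2"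
    using col_counts_if_small_weak_3_resolving[OF n S small] by blast
  obtain a0 where a0: "a0 \<in> {1..n}" "row_count S a0 = 1" "\<And>a. a \<in> {1..n} - {a0} \<Longrightarrow> row_count S a = 2"
    using row_counts_if_small_weak_3_resolving[OF n S small] by blast
  obtain \<alpha> where \<alpha>: "{z\<in>S. snd z = b0} = {(\<alpha>, b0)}"
    using b0(2) by (rule col_count_eq_oneE)
  obtain \<beta> where \<beta>: "{z\<in>S. fst z = a0} = {(a0, \<beta>)}"
    using a0(2) by (rule row_count_eq_oneE)
  have in_col_b0: "a = \<alpha>" if "(a, b0) \<in> S" for a
    using that \<alpha> by (metis (mono_tags, lifting) mem_Collect_eq singletonD snd_conv prod.inject)
  have "(\<alpha>, b0) \<in> S" "(a0, \<beta>) \<in> S" using \<alpha> \<beta> by auto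
  show False
  proof (cases "\<alpha> = a0")
    case True
    \<comment> \<open>the light row and column share their point; any point of another row completes the rectangle\<close>
    obtain a' where a': "a' \<in> {1..n}" "a' \<noteq> a0" using exists_avoiding_two[OF n] by blast
    then have "row_count S a' = 2" using a0(3) by blast
    then have "{z\<in>S. fst z = a'} \<noteq> {}" unfolding row_count_def by force
    then obtain b' where b': "(a', b') \<in> S" by force
    have "b' \<noteq> b0" using in_col_b0[of a'] b' a'(2) True by blast
    then have "col_count S b' = 2" using b0(3) in_range[OF b'] by blast
    have "(a0, b0) \<in> S" using \<open>(\<alpha>, b0) \<in> S\<close> True by simp
    from rectangle_count_ge_if_weak_3_resolving[OF n S a'(2)[symmetric] \<open>b' \<noteq> b0\<close> this b']
    show False using a0(2) b0(2) \<open>row_count S a' = 2\<close> \<open>col_count S b' = 2\<close> by simp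
  next
    case False
    have "\<beta> \<noteq> b0" using in_col_b0[of a0] \<open>(a0, \<beta>) \<in> S\<close> False by blast
    have "row_count S \<alpha> = 2" using a0(3) in_range[OF \<open>(\<alpha>, b0) \<in> S\<close>] False by blast
    have "col_count S \<beta> = 2" using b0(3) in_range[OF \<open>(a0, \<beta>) \<in> S\<close>] \<open>\<beta> \<noteq> b0\<close> by blast
    from rectangle_count_ge_if_weak_3_resolving[OF n S False[symmetric] \<open>\<beta> \<noteq> b0\<close>[symmetric] \<open>(a0, \<beta>) \<in> S\<close> \<open>(\<alpha>, b0) \<in> S\<close>]
    show False using a0(2) b0(2) \<open>row_count S \<alpha> = 2\<close> \<open>col_count S \<beta> = 2\<close> by simp
  qed
qed

definition cyclic_succ :: "nat \<Rightarrow> nat \<Rightarrow> nat" where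
  "cyclic_succ n a = (if a < n then a + 1 else 1)"

definition two_diagonals :: "nat \<Rightarrow> (nat \<times> nat) set" where
  "two_diagonals n = {(a, b). a \<in> {1..n} \<and> (b = a \<or> b = cyclic_succ n a)}"

lemma cyclic_succ_eq_iff:
  assumes "a \<in> {1..n}" "b \<in> {1..n}"
  shows "cyclic_succ n a = b \<longleftrightarrow> a = (if b = 1 then n else b - 1)"
  using assms by (auto simp: cyclic_succ_def)

lemma two_diagonals_subset: "two_diagonals n \<subseteq> KxK_V n"
  by (auto simp: two_diagonals_def cyclic_succ_def KxK_V_def)

lemma row_count_two_diagonals:
  assumes "2 \<le> n" and "a \<in> {1..n}"
  shows "row_count (two_diagonals n) a = 2"
proof -
  have "{z \<in> two_diagonals n. fst z = a} = {(a, a), (a, cyclic_succ n a)}"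
    using assms(2) by (auto simp: two_diagonals_def)
  moreover have "a \<noteq> cyclic_succ n a" using assms by (auto simp: cyclic_succ_def)
  ultimately show ?thesis by (simp add: row_count_def)
qed

lemma col_count_two_diagonals:
  assumes "2 \<le> n" and b: "b \<in> {1..n}"
  shows "col_count (two_diagonals n) b = 2"
proof -
  define p where "p = (if b = 1 then n else b - 1)"
  have p: "p \<in> {1..n}" "p \<noteq> b" using assms by (auto simp: p_def)
  have col: "(a, b) \<in> two_diagonals n \<longleftrightarrow> a = b \<or> a = p" for a
    using cyclic_succ_eq_iff[of a n b] b p(1) by (auto simp: two_diagonals_def p_def)
  have "z \<in> two_diagonals n \<and> snd z = b \<longleftrightarrow> z = (b, b) \<or> z = (p, b)" for z
    using col[of "fst z"] by (cases z) auto
  then have "{z \<in> two_diagonals n. snd z = b} = {(b, b), (p, b)}" by blast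
  with p(2) show ?thesis by (simp add: col_count_def)
qed

lemma card_two_diagonals: "2 \<le> n \<Longrightarrow> card (two_diagonals n) = 2 * n"
  using card_eq_sum_col_count[OF two_diagonals_subset, of n] col_count_two_diagonals by simp

lemma two_diagonals_no_rectangle:
  assumes "3 \<le> n" "a \<noteq> a'" "b \<noteq> b'"
    and "(a, b) \<in> two_diagonals n" "(a', b') \<in> two_diagonals n"
    and "(a, b') \<in> two_diagonals n" "(a', b) \<in> two_diagonals n"
  shows False
  using assms by (auto simp: two_diagonals_def cyclic_succ_def split: if_splits)

lemma weak_3_resolving_two_diagonals:
  assumes n: "3 \<le> n"
  shows "weak_k_resolving (KxK_V n) KxK_E 3 (two_diagonals n)"
  unfolding weak_k_resolving_def
proof (intro conjI two_diagonals_subset ballI impI)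
  let ?T = "two_diagonals n"
  fix x y assume x: "x \<in> KxK_V n" and y: "y \<in> KxK_V n" and "x \<noteq> y"
  obtain a b a' b' where xy: "x = (a, b)" "y = (a', b')" by fastforce
  have ab: "a \<in> {1..n}" "b \<in> {1..n}" "a' \<in> {1..n}" "b' \<in> {1..n}"
    using x y xy by (auto simp: KxK_V_def)
  have rows: "row_count ?T a = 2" "row_count ?T a' = 2"
    and cols: "col_count ?T b = 2" "col_count ?T b' = 2"
    using n ab row_count_two_diagonals col_count_two_diagonals by auto
  consider "a = a'" | "b = b'" | "a \<noteq> a'" "b \<noteq> b'" by blast
  then show "3 \<le> delta_set (KxK_V n) KxK_E ?T x y"
  proof cases
    case 1
    with \<open>x \<noteq> y\<close> xy have "b \<noteq> b'" by simp
    with delta_set_same_row[OF n two_diagonals_subset] x y xy 1 cols show ?thesis by simp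
  next
    case 2
    with \<open>x \<noteq> y\<close> xy have "a \<noteq> a'" by simp
    with delta_set_same_col[OF n two_diagonals_subset] x y xy 2 rows show ?thesis by simp
  next
    case 3
    with two_diagonals_no_rectangle[OF n 3]
      delta_set_diagonal[OF n two_diagonals_subset, of a b a' b'] x y xy rows cols
    show ?thesis by (auto simp: of_bool_def split: if_splits)
  qed
qed

theorem mainTheorem4:
  fixes n :: nat
  assumes "n \<ge> 4"
  shows "wdim (KxK_V n) KxK_E 3 = 2 * n"
  unfolding wdim_def
proof (rule Least_equality)
  show "\<exists>S. weak_k_resolving (KxK_V n) KxK_E 3 S \<and> card S = 2 * n"
    using weak_3_resolving_two_diagonals card_two_diagonals assms
    by (intro exI[of _ "two_diagonals n"]) simp
next
  fix m assume "\<exists>S. weak_k_resolving (KxK_V n) KxK_E 3 S \<and> card S = m"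
  then show "2 * n \<le> m" using card_ge_if_weak_3_resolving assms by fastforce
qed

end
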